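(* Let $N\subset\mathbb{N}$ be infinite and consider the subsequence $(\bar d_{\gamma_n})_{n\in N}$ of the basis $(\bar d_{\gamma_n})_{n\in\mathbb{N}}$ of $\mathfrak{X}_{\bar\Gamma}$. Then there exists an infinite set $M\subset N$ such that for no two $n,m\in M$ are the nodes $\gamma_n,\gamma_m$ neighbours.
   Context: Fix increasing sequences of positive integers $(m_k),(n_k),(l_k)$ tending to $\infty$ with $m_1=4$, $n_1=4$, $l_1=2$ and $m_km_{k-1}\le m_1^{l_k}$, $(n_{k-1}/m_{k-1})^{l_k}\le n_k/(m_{k-1}m_k)$ for all $k$. For each $q$ let $\mathrm{Net}_{1,q}$ be a finite symmetric $\frac{1}{4n_q^2}$-net of $[-1,1]$ containing $\pm1$. Construction of $\mathfrak{X}_{\bar\Gamma}$: finite sets of nodes $\bar\Delta_q$ are defined recursively, with $\bar\Gamma_q=\bar\Delta_1\cup\dots\cup\bar\Delta_q$; nodes are enumerated $(\gamma_n)_n$ so that each $\bar\Gamma_q$ is the initial interval $\{1,\dots,\#\bar\Gamma_q\}$ of $\mathbb N$ (so intervals of nodes make sense). For each $\gamma\in\bar\Delta_{q}$ one defines $\bar c^*_\gamma\in\ell_1(\bar\Gamma_{q-1})$ and $\bar d^*_\gamma=e^*_\gamma-\bar c^*_\gamma$, where $(e^*_\gamma)$ is the unit vector basis of $\ell_1$; then $\mathrm{span}\{\bar d^*_{\gamma_i}:i\le n\}=\mathrm{span}\{e^*_{\gamma_i}:i\le n\}$ for all $n$, and for an interval $I$ let $\bar P^*_I$ be the projection $\sum_n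 a_n\bar d^*_{\gamma_n}\mapsto\sum_{n\in I}a_n\bar d^*_{\gamma_n}$. Start with $\bar\Delta_1=\{1\}$, $\bar c^*_1=0$. Given $\bar\Delta_1,\dots,\bar\Delta_q$, the set $\bar\Delta_{q+1}$ consists of: (a) all tuples $\gamma=(q+1,0,m_j,I,\epsilon,\lambda e^*_\eta)$ with $1\le j\le q$, $I$ an interval in $\bar\Gamma_q$, $\epsilon\in\{\pm1\}$, $\lambda\in\mathrm{Net}_{1,q}$, $\eta\in\bar\Gamma_q$, $\bar P^*_I e^*_\eta\ne0$, $\lambda\neq 0$; for these $\bar c^*_\gamma=\frac{1}{m_j}\epsilon\lambda\bar P^*_Ie^*_\eta$, and we set $\mathrm{age}(\gamma)=1$; (b) all tuples $\gamma=(q+1,\xi,m_j,I,\epsilon,\lambda e^*_\eta)$ with $1\le p<q$, $1\le j\le p$, $\xi\in\bar\Delta_p$ of weight $m_j^{-1}$ and $\mathrm{age}(\xi)<n_j$, $\epsilon\in\{\pm1\}$, $\lambda\in\mathrm{Net}_{1,q}$, $\eta\in\bar\Gamma_q\setminus\bar\Gamma_p$, $I$ an interval in $\bar\Gamma_q\setminus\bar\Gamma_p$, $\bar P^*_I(\lambda e^*_\eta)\ne0$; for these $\bar c^*_\gamma=e^*_\xi+\frac1{m_j}\epsilon\lambda\bar P^*_Ie^*_\eta$ and $\mathrm{age}(\gamma)=\mathrm{age}(\xi)+1$. In both cases the weight of $\gamma$ is $w(\gamma)=m_j^{-1}$ and $\mathrm{rank}(\gamma)=q+1$. Let $\bar\Gamma=\bigcup_q\bar\Gamma_q$,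 let $\bar d_\gamma\in\ell_\infty(\bar\Gamma)$ be the vectors biorthogonal to $(\bar d^*_\delta)_\delta$ (i.e. $\bar d^*_\delta(\bar d_\gamma)=\delta_{\gamma\delta}$), and let $\mathfrak{X}_{\bar\Gamma}$ be their closed linear span in $\ell_\infty(\bar\Gamma)$ with the sup norm; $(\bar d_{\gamma_n})_n$ is a basis of $\mathfrak X_{\bar\Gamma}$. Evaluation analysis and neighbours: every node $\gamma\ne 1$ of weight $m_j^{-1}$ determines a unique chain $\xi_1,\dots,\xi_a=\gamma$ where $\xi_1$ has second coordinate $0$ and $\xi_i=(q_i+1,\xi_{i-1},m_j,\dots)$ for $1<i\le a$; the bd-part of $e^*_\gamma$ is $\sum_{i=1}^a\bar d^*_{\xi_i}$. Two nodes $\zeta,\zeta'$ are called neighbours if there is a node $\gamma$ whose chain $(\xi_i)_{i=1}^a$ satisfies $\zeta=\xi_{i_1}$, $\zeta'=\xi_{i_2}$ for some $i_1<i_2$. *)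

theory Defs
  imports Complex_Main
begin

text \<open>Nodes of the Bourgain--Delbaen type set \<open>\<bar>\<Gamma>\<close>.
  \<open>Root\<close> is the node 1 of \<open>\<bar>\<Delta>\<^sub>1\<close>.
  \<open>Nd r \<xi> j a b \<epsilon> \<lambda> \<eta>\<close> encodes the tuple \<open>(r, \<xi>, m\<^sub>j, I, \<epsilon>, \<lambda> e*\<^sub>\<eta>)\<close>, where
  \<open>\<xi> = None\<close> stands for the second coordinate 0, \<open>\<xi> = Some \<xi>'\<close> for the node \<open>\<xi>'\<close>,
  the weight \<open>m\<^sub>j\<close> is recorded by its index \<open>j\<close>, and the (nonempty) interval of nodes
  \<open>I\<close> is recorded by its endpoints \<open>a \<le> b\<close> in the enumeration, i.e. \<open>I = {\<gamma>\<^sub>a,\<dots>,\<gamma>\<^sub>b}\<close>.\<close>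
datatype node = Root | Nd nat "node option" nat nat nat int real node

fun weight :: "(nat \<Rightarrow> nat) \<Rightarrow> node \<Rightarrow> real" where
  "weight m Root = 0"
| "weight m (Nd r x j a b e lam eta) = 1 / real (m j)"

fun age :: "node \<Rightarrow> nat" where
  "age Root = 0"
| "age (Nd r None j a b e lam eta) = 1"
| "age (Nd r (Some x) j a b e lam eta) = age x + 1"

fun chain :: "node \<Rightarrow> node list" where
  "chain Root = []"
| "chain (Nd r None j a b e lam eta) = [Nd r None j a b e lam eta]"
| "chain (Nd r (Some x) j a b e lam eta) = chain x @ [Nd r (Some x) j a b e lam eta]"

definition params :: "(nat \<Rightarrow> nat) \<Rightarrow> (nat \<Rightarrow> nat) \<Rightarrow> (nat \<Rightarrow> nat) \<Rightarrow> (nat \<Rightarrow> real set) \<Rightarrow> bool" where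
  "params m n l Net \<longleftrightarrow>
     (\<forall>k\<ge>1. m k < m (Suc k) \<and> n k < n (Suc k) \<and> l k < l (Suc k)) \<and>
     m 1 = 4 \<and> n 1 = 4 \<and> l 1 = 2 \<and>
     (\<forall>k\<ge>2. m k * m (k - 1) \<le> m 1 ^ l k) \<and>
     (\<forall>k\<ge>2. (real (n (k - 1)) / real (m (k - 1))) ^ l k
               \<le> real (n k) / (real (m (k - 1)) * real (m k))) \<and>
     (\<forall>q\<ge>1. finite (Net q) \<and> Net q \<subseteq> {-1..1} \<and> (\<forall>x\<in>Net q. - x \<in> Net q) \<and>
             1 \<in> Net q \<and> -1 \<in> Net q \<and>
             (\<forall>x\<in>{-1..1::real}. \<exists>y\<in>Net q. \<bar>x - y\<bar> \<le> 1 / (4 * real (n q) ^ 2)))"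

definition Gam :: "(nat \<Rightarrow> node set) \<Rightarrow> nat \<Rightarrow> node set" where
  "Gam D q = (\<Union>p\<in>{1..q}. D p)"

definition GamAll :: "(nat \<Rightarrow> node set) \<Rightarrow> node set" where
  "GamAll D = (\<Union>q\<in>{1..}. D q)"

text \<open>Elements of \<open>\<ell>\<^sub>1\<close> are represented as (finitely supported) functions \<open>node \<Rightarrow> real\<close>.\<close>
definition estar :: "node \<Rightarrow> node \<Rightarrow> real" where
  "estar \<eta> = (\<lambda>\<zeta>. if \<zeta> = \<eta> then 1 else 0)"

definition dstar :: "(node \<Rightarrow> node \<Rightarrow> real) \<Rightarrow> node \<Rightarrow> node \<Rightarrow> real" where
  "dstar c \<gamma> = (\<lambda>\<zeta>. estar \<gamma> \<zeta> - c \<gamma> \<zeta>)"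

definition Pstar :: "(nat \<Rightarrow> node) \<Rightarrow> (node \<Rightarrow> node \<Rightarrow> real) \<Rightarrow> nat \<Rightarrow> nat
                     \<Rightarrow> (node \<Rightarrow> real) \<Rightarrow> (node \<Rightarrow> real)" where
  "Pstar g c a b f = (THE h. \<exists>K (co :: nat \<Rightarrow> real).
      f = (\<lambda>\<zeta>. \<Sum>k\<in>{1..K}. co k * dstar c (g k) \<zeta>) \<and>
      h = (\<lambda>\<zeta>. \<Sum>k\<in>{a..b} \<inter> {1..K}. co k * dstar c (g k) \<zeta>))"

definition nodesA :: "(nat \<Rightarrow> real set) \<Rightarrow> (nat \<Rightarrow> node set) \<Rightarrow> (nat \<Rightarrow> node)
                      \<Rightarrow> (node \<Rightarrow> node \<Rightarrow> real) \<Rightarrow> nat \<Rightarrow> node set" where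
  "nodesA Net D g c q = {Nd (q + 1) None j a b e lam eta | j a b e lam eta.
      1 \<le> j \<and> j \<le> q \<and> 1 \<le> a \<and> a \<le> b \<and> b \<le> card (Gam D q) \<and>
      e \<in> {1, -1} \<and> lam \<in> Net q \<and> lam \<noteq> 0 \<and> eta \<in> Gam D q \<and>
      Pstar g c a b (estar eta) \<noteq> (\<lambda>_. 0)}"

definition nodesB :: "(nat \<Rightarrow> nat) \<Rightarrow> (nat \<Rightarrow> nat) \<Rightarrow> (nat \<Rightarrow> real set) \<Rightarrow> (nat \<Rightarrow> node set)
                      \<Rightarrow> (nat \<Rightarrow> node) \<Rightarrow> (node \<Rightarrow> node \<Rightarrow> real) \<Rightarrow> nat \<Rightarrow> node set" where
  "nodesB m n Net D g c q = {Nd (q + 1) (Some x) j a b e lam eta | x j a b e lam eta p.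
      1 \<le> p \<and> p < q \<and> 1 \<le> j \<and> j \<le> p \<and> x \<in> D p \<and> weight m x = 1 / real (m j) \<and>
      age x < n j \<and> e \<in> {1, -1} \<and> lam \<in> Net q \<and> eta \<in> Gam D q - Gam D p \<and>
      card (Gam D p) < a \<and> a \<le> b \<and> b \<le> card (Gam D q) \<and>
      Pstar g c a b (\<lambda>\<zeta>. lam * estar eta \<zeta>) \<noteq> (\<lambda>_. 0)}"

fun cformula :: "(nat \<Rightarrow> nat) \<Rightarrow> (nat \<Rightarrow> node) \<Rightarrow> (node \<Rightarrow> node \<Rightarrow> real) \<Rightarrow> node \<Rightarrow> node \<Rightarrow> real" where
  "cformula m g c Root = (\<lambda>_. 0)"
| "cformula m g c (Nd r None j a b e lam eta) =
     (\<lambda>\<zeta>. 1 / real (m j) * real_of_int e * lam * Pstar g c a b (estar eta) \<zeta>)"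
| "cformula m g c (Nd r (Some x) j a b e lam eta) =
     (\<lambda>\<zeta>. estar x \<zeta> + 1 / real (m j) * real_of_int e * lam * Pstar g c a b (estar eta) \<zeta>)"

text \<open>The recursive construction of \<open>\<bar>\<Delta>\<^sub>q\<close>, the enumeration \<open>(\<gamma>\<^sub>n)\<^sub>n\<^sub>\<ge>\<^sub>1\<close> (given by \<open>g\<close>)
  and the functionals \<open>c*\<^sub>\<gamma>\<close> (given by \<open>c\<close>).\<close>
definition construction :: "(nat \<Rightarrow> nat) \<Rightarrow> (nat \<Rightarrow> nat) \<Rightarrow> (nat \<Rightarrow> real set) \<Rightarrow> (nat \<Rightarrow> node set)
                            \<Rightarrow> (nat \<Rightarrow> node) \<Rightarrow> (node \<Rightarrow> node \<Rightarrow> real) \<Rightarrow> bool" where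
  "construction m n Net D g c \<longleftrightarrow>
     D 1 = {Root} \<and>
     (\<forall>q\<ge>1. D (q + 1) = nodesA Net D g c q \<union> nodesB m n Net D g c q) \<and>
     bij_betw g {1..} (GamAll D) \<and>
     (\<forall>q\<ge>1. g ` {1..card (Gam D q)} = Gam D q) \<and>
     (\<forall>\<gamma>\<in>GamAll D. c \<gamma> = cformula m g c \<gamma>)"

definition neighbours :: "(nat \<Rightarrow> node set) \<Rightarrow> node \<Rightarrow> node \<Rightarrow> bool" where
  "neighbours D \<zeta> \<zeta>' \<longleftrightarrow> (\<exists>\<gamma>\<in>GamAll D. \<exists>i1 i2. i1 < i2 \<and> i2 < length (chain \<gamma>) \<and>
       chain \<gamma> ! i1 = \<zeta> \<and> chain \<gamma> ! i2 = \<zeta>')"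

end

theory Submission
  imports Defs "HOL-Library.Ramsey"
begin

text \<open>By Ramsey's theorem an infinite \<open>N\<close> contains an infinite \<open>M\<close> on which being neighbours
  either never or always happens (in one of the two directions). The second alternative is
  impossible: neighbours are comparable members of chains, all chain members share the weight
  \<open>m\<^sub>j\<^sup>-\<^sup>1\<close>, and a chain of weight \<open>m\<^sub>j\<^sup>-\<^sup>1\<close> has length at most \<open>n\<^sub>j\<close>. Since every node has only
  finitely many predecessors in its chain, an infinite family of pairwise comparable nodes would
  contain infinitely many successors of one node, with pairwise different but bounded ages.\<close>

corollary Ramsey2_independent_or_clique:
  fixes R :: "'a \<Rightarrow> 'a \<Rightarrow> bool"
  assumes "infinite Z"
  obtains Y where "Y \<subseteq> Z" "infinite Y"
    "(\<forall>x\<in>Y. \<forall>y\<in>Y. x \<noteq> y \<longrightarrow> \<not> R x y) \<or> (\<forall>x\<in>Y. \<forall>y\<in>Y. x \<noteq> y \<longrightarrow> R x y \<or> R y x)"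
proof -
  define f where "f S = (if \<exists>x y. S = {x, y} \<and> x \<noteq> y \<and> (R x y \<or> R y x) then 1 else 0::nat)" for S
  have f_pair: "f {x, y} = (if R x y \<or> R y x then 1 else 0)" if "x \<noteq> y" for x y
    using that unfolding f_def by (auto simp: doubleton_eq_iff)
  have "\<forall>x\<in>Z. \<forall>y\<in>Z. x \<noteq> y \<longrightarrow> f {x, y} < 2"
    unfolding f_def by simp
  from Ramsey2[OF assms this] obtain Y t where Y: "Y \<subseteq> Z" "infinite Y"
    and "t < 2" and mono: "\<forall>x\<in>Y. \<forall>y\<in>Y. x \<noteq> y \<longrightarrow> f {x, y} = t"
    by blast
  have "(\<forall>x\<in>Y. \<forall>y\<in>Y. x \<noteq> y \<longrightarrow> \<not> R x y) \<or> (\<forall>x\<in>Y. \<forall>y\<in>Y. x \<noteq> y \<longrightarrow> R x y \<or> R y x)"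
    using mono f_pair by (cases "t = 0") (simp split: if_splits; blast)+
  with Y that show ?thesis by blast
qed

lemma stepwise_less_imp_less:
  fixes f :: "nat \<Rightarrow> 'a::order"
  assumes step: "\<forall>k\<ge>1. f k < f (Suc k)" and "1 \<le> i" "i < j"
  shows "f i < f j"
proof -
  have "Suc i \<le> j" using \<open>i < j\<close> by simp
  then show ?thesis
  proof (induction j rule: dec_induct)
    case base
    then show ?case using step \<open>1 \<le> i\<close> by simp
  next
    case (step j)
    then have "f j < f (Suc j)" using assms(1) \<open>1 \<le> i\<close> by simp
    with step.IH show ?case by simp
  qed
qed

lemma params_pos:
  assumes "params m n l Net" "1 \<le> j"
  shows "0 < m j" "1 \<le> n j"
proof -
  have "\<forall>k\<ge>1. m k < m (Suc k)" "\<forall>k\<ge>1. n k < n (Suc k)" "m 1 = 4" "n 1 = 4"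
    using assms(1) unfolding params_def by auto
  then show "0 < m j" "1 \<le> n j"
    using stepwise_less_imp_less[of m 1 j] stepwise_less_imp_less[of n 1 j] assms(2)
    by (cases "j = 1"; force)+
qed

lemma params_inj_m:
  assumes "params m n l Net" "1 \<le> i" "1 \<le> j" "m i = m j"
  shows "i = j"
proof -
  have "\<forall>k\<ge>1. m k < m (Suc k)"
    using assms(1) unfolding params_def by auto
  then show ?thesis
    using stepwise_less_imp_less[of m i j] stepwise_less_imp_less[of m j i] assms(2-4)
    by (metis less_irrefl nat_neq_iff)
qed

lemma chain_nth: "i < length (chain x) \<Longrightarrow> chain (chain x ! i) = take (Suc i) (chain x)"
proof (induction x arbitrary: i rule: chain.induct)
  case (3 r x j a b e lam eta)
  then show ?case
    by (cases "i < length (chain x)") (simp_all add: nth_append)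
qed simp_all

lemma mem_chain_age_less: "y \<in> set (chain z) \<Longrightarrow> y \<noteq> z \<Longrightarrow> age y < age z"
  by (induction z rule: chain.induct) (auto simp: less_Suc_eq)

lemma neighbours_imp_mem_chain:
  assumes "neighbours D \<zeta> \<zeta>'"
  shows "\<zeta> \<in> set (chain \<zeta>')"
proof -
  obtain \<gamma> i1 i2 where "i1 < i2" "i2 < length (chain \<gamma>)" "chain \<gamma> ! i1 = \<zeta>" "chain \<gamma> ! i2 = \<zeta>'"
    using assms unfolding neighbours_def by blast
  then have "chain \<zeta>' = take (Suc i2) (chain \<gamma>)"
    using chain_nth by auto
  moreover have "\<zeta> = take (Suc i2) (chain \<gamma>) ! i1" "i1 < length (take (Suc i2) (chain \<gamma>))"
    using \<open>i1 < i2\<close> \<open>i2 < length (chain \<gamma>)\<close> \<open>chain \<gamma> ! i1 = \<zeta>\<close> by auto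
  ultimately show ?thesis
    by (metis nth_mem)
qed

fun windex :: "node \<Rightarrow> nat" where
  "windex Root = 0"
| "windex (Nd r x j a b e lam eta) = j"

fun wellformed :: "(nat \<Rightarrow> nat) \<Rightarrow> node \<Rightarrow> bool" where
  "wellformed n Root = True"
| "wellformed n (Nd r None j a b e lam eta) \<longleftrightarrow> 1 \<le> j \<and> 1 \<le> n j"
| "wellformed n (Nd r (Some x) j a b e lam eta) \<longleftrightarrow>
     wellformed n x \<and> x \<noteq> Root \<and> windex x = j \<and> age x < n j"

lemma wellformed_windex_pos: "wellformed n x \<Longrightarrow> x \<noteq> Root \<Longrightarrow> 1 \<le> windex x"
  by (induction x rule: chain.induct) auto

lemma wellformed_mem_chain_windex: "wellformed n z \<Longrightarrow> y \<in> set (chain z) \<Longrightarrow> windex y = windex z"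
  by (induction z rule: chain.induct) auto

lemma wellformed_age_le: "wellformed n x \<Longrightarrow> age x \<le> n (windex x)"
  by (induction x rule: chain.induct) auto

lemma construction_wellformed:
  assumes P: "params m n l Net" and C: "construction m n Net D g c"
  shows "q \<ge> 1 \<Longrightarrow> \<gamma> \<in> D q \<Longrightarrow> wellformed n \<gamma>"
proof (induction q arbitrary: \<gamma> rule: less_induct)
  case (less q)
  show ?case
  proof (cases "q = 1")
    case True
    then show ?thesis using C less.prems unfolding construction_def by auto
  next
    case False
    define q' where "q' = q - 1"
    have q': "q = q' + 1" "q' \<ge> 1"
      using less.prems(1) False unfolding q'_def by simp_all
    then have "\<gamma> \<in> nodesA Net D g c q' \<union> nodesB m n Net D g c q'"
      using C less.prems(2) unfolding construction_def by auto
    then show ?thesis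
    proof
      assume "\<gamma> \<in> nodesA Net D g c q'"
      then obtain j a b e lam eta where "\<gamma> = Nd (q' + 1) None j a b e lam eta" "1 \<le> j"
        unfolding nodesA_def by blast
      then show ?thesis using params_pos[OF P] by simp
    next
      assume "\<gamma> \<in> nodesB m n Net D g c q'"
      then obtain x j a b e lam eta p where \<gamma>: "\<gamma> = Nd (q' + 1) (Some x) j a b e lam eta"
        and "1 \<le> p" "p < q'" "x \<in> D p" and j: "1 \<le> j"
        and weight: "weight m x = 1 / real (m j)" and "age x < n j"
        unfolding nodesB_def by blast
      have x: "wellformed n x" using less.IH[of p x] \<open>1 \<le> p\<close> \<open>p < q'\<close> \<open>x \<in> D p\<close> q' by simp
      have "0 < m j" using params_pos[OF P j] by simp
      then have "x \<noteq> Root" using weight by auto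
      then have "1 \<le> windex x" using wellformed_windex_pos[OF x] by simp
      moreover have "m (windex x) = m j"
        using weight \<open>x \<noteq> Root\<close> by (cases x) (auto simp: field_simps)
      ultimately have "windex x = j" using params_inj_m[OF P _ j] by blast
      then show ?thesis using \<gamma> x \<open>x \<noteq> Root\<close> \<open>age x < n j\<close> by simp
    qed
  qed
qed

lemma finite_chain_comparable:
  assumes wf: "\<forall>x\<in>A. wellformed n x"
    and comparable: "\<forall>x\<in>A. \<forall>y\<in>A. x \<noteq> y \<longrightarrow> x \<in> set (chain y) \<or> y \<in> set (chain x)"
  shows "finite A"
proof (cases "A = {}")
  case False
  then obtain x0 where "x0 \<in> A" by blast
  define above where "above = {y \<in> A. x0 \<in> set (chain y)}"
  have "inj_on age above"
  proof (rule inj_onI, rule ccontr)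
    fix y z assume "y \<in> above" "z \<in> above" "age y = age z" "y \<noteq> z"
    then show False
      using comparable mem_chain_age_less[of y z] mem_chain_age_less[of z y]
      unfolding above_def by auto
  qed
  moreover have "age ` above \<subseteq> {..n (windex x0)}"
    using wf wellformed_age_le wellformed_mem_chain_windex unfolding above_def by fastforce
  ultimately have "finite above" using finite_imageD finite_subset by blast
  moreover have "A \<subseteq> insert x0 (above \<union> set (chain x0))"
    using comparable \<open>x0 \<in> A\<close> unfolding above_def by blast
  ultimately show ?thesis using finite_subset by auto
qed simp

corollary finite_neighbours_clique:
  assumes "\<forall>x\<in>A. wellformed n x"
    and "\<forall>x\<in>A. \<forall>y\<in>A. x \<noteq> y \<longrightarrow> neighbours D x y \<or> neighbours D y x"
  shows "finite A"
  using assms neighbours_imp_mem_chain by (intro finite_chain_comparable) blast+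

theorem lemma3p2:
  fixes m n l :: "nat \<Rightarrow> nat" and Net :: "nat \<Rightarrow> real set"
    and D :: "nat \<Rightarrow> node set" and g :: "nat \<Rightarrow> node" and c :: "node \<Rightarrow> node \<Rightarrow> real"
    and N :: "nat set"
  assumes "params m n l Net"
    and "construction m n Net D g c"
    and "N \<subseteq> {1..}" and "infinite N"
  shows "\<exists>M\<subseteq>N. infinite M \<and> (\<forall>i\<in>M. \<forall>k\<in>M. i \<noteq> k \<longrightarrow> \<not> neighbours D (g i) (g k))"
proof -
  have bij: "bij_betw g {1..} (GamAll D)"
    using assms(2) unfolding construction_def by blast
  have inj: "inj_on g N"
    using inj_on_subset[OF bij_betw_imp_inj_on[OF bij] assms(3)] .
  have wellformed: "wellformed n (g i)" if "i \<in> N" for i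
  proof -
    have "g i \<in> GamAll D" using bij_betwE[OF bij] that assms(3) by blast
    then obtain q where "q \<ge> 1" "g i \<in> D q" unfolding GamAll_def by auto
    then show ?thesis using construction_wellformed[OF assms(1,2)] by blast
  qed
  obtain M where M: "M \<subseteq> N" "infinite M"
    and "(\<forall>i\<in>M. \<forall>k\<in>M. i \<noteq> k \<longrightarrow> \<not> neighbours D (g i) (g k))
       \<or> (\<forall>i\<in>M. \<forall>k\<in>M. i \<noteq> k \<longrightarrow> neighbours D (g i) (g k) \<or> neighbours D (g k) (g i))"
    using Ramsey2_independent_or_clique[OF assms(4), where R = "\<lambda>i k. neighbours D (g i) (g k)"] by blast
  then show ?thesis
  proof (elim disjE)
    assume clique: "\<forall>i\<in>M. \<forall>k\<in>M. i \<noteq> k \<longrightarrow> neighbours D (g i) (g k) \<or> neighbours D (g k) (g i)"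
    have "finite (g ` M)"
    proof (rule finite_neighbours_clique)
      show "\<forall>x\<in>g ` M. wellformed n x" using wellformed M(1) by blast
      show "\<forall>x\<in>g ` M. \<forall>y\<in>g ` M. x \<noteq> y \<longrightarrow> neighbours D x y \<or> neighbours D y x"
        using clique by auto
    qed
    then have "finite M" using finite_image_iff[OF inj_on_subset[OF inj M(1)]] by simp
    with M(2) show ?thesis by contradiction
  qed (use M in blast)
qed

end
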